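(* For every $A\ge0$ and $T>0$ there is $\alpha\ge0$ (depending only on $A$, $T$ and $f,r$) such that: if $y$ solves $y_t+f(y)_x=y_{xx}+r(y)$ on $[0,1]\times(0,T)$ with $y(0,t)=y(1,t)=0$ and $\|y(\cdot,0)\|_\infty\le A$, and $\eta$ solves $\eta_t+[f'(y)\eta]_x=\eta_{xx}+r'(y)\eta$ on $(0,T)$ with Dirichlet boundary conditions and $\eta(\cdot,0)=v\in H^1_0(0,1)$, then $$\|\eta^2(t)\|\le\|v^2\|e^{\alpha t}\qquad\text{for all }t<T.$$
   Context: $\|\cdot\|$ denotes the $L^2(0,1)$ norm, so $\|\eta^2\|=\|\eta\|_{L^4(0,1)}^2$. Standing assumptions: $f,r\in C^2(\mathbb R)$ and $\int_{-\infty}^0\frac{dy}{|r(y)|+1}=\int_0^\infty\frac{dy}{|r(y)|+1}=\infty$. *)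

theory Defs
  imports "HOL-Analysis.Analysis"
begin

definition C2 :: "(real \<Rightarrow> real) \<Rightarrow> bool" where
  "C2 g \<longleftrightarrow> (\<exists>g' g''. (\<forall>x. (g has_real_derivative g' x) (at x)) \<and>
      (\<forall>x. (g' has_real_derivative g'' x) (at x)) \<and> continuous_on UNIV g'')"

definition L2norm :: "(real \<Rightarrow> real) \<Rightarrow> real" where
  "L2norm g = sqrt (integral {0..1} (\<lambda>x. (g x)^2))"

definition classical_reg :: "real \<Rightarrow> (real \<Rightarrow> real \<Rightarrow> real) \<Rightarrow> bool" where
  "classical_reg T u \<longleftrightarrow>
     continuous_on ({0..1} \<times> {0..<T}) (\<lambda>(x,t). u x t) \<and>
     (\<exists>ut ux uxx.
        continuous_on ({0..1} \<times> {0<..<T}) (\<lambda>(x,t). ut x t) \<and>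
        continuous_on ({0..1} \<times> {0<..<T}) (\<lambda>(x,t). ux x t) \<and>
        continuous_on ({0..1} \<times> {0<..<T}) (\<lambda>(x,t). uxx x t) \<and>
        (\<forall>x\<in>{0..1}. \<forall>t\<in>{0<..<T}.
           ((\<lambda>s. u x s) has_real_derivative ut x t) (at t) \<and>
           ((\<lambda>\<xi>. u \<xi> t) has_real_derivative ux x t) (at x within {0..1}) \<and>
           ((\<lambda>\<xi>. ux \<xi> t) has_real_derivative uxx x t) (at x within {0..1})))"

definition solves_y :: "(real \<Rightarrow> real) \<Rightarrow> (real \<Rightarrow> real) \<Rightarrow> real \<Rightarrow> (real \<Rightarrow> real \<Rightarrow> real) \<Rightarrow> bool" where
  "solves_y f r T y \<longleftrightarrow> classical_reg T y \<and>
     (\<forall>t\<in>{0..<T}. y 0 t = 0 \<and> y 1 t = 0) \<and>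
     (\<forall>x\<in>{0<..<1}. \<forall>t\<in>{0<..<T}.
        deriv (\<lambda>s. y x s) t + deriv (\<lambda>\<xi>. f (y \<xi> t)) x
          = deriv (deriv (\<lambda>\<xi>. y \<xi> t)) x + r (y x t))"

definition solves_lin :: "(real \<Rightarrow> real) \<Rightarrow> (real \<Rightarrow> real) \<Rightarrow> real \<Rightarrow> (real \<Rightarrow> real \<Rightarrow> real)
    \<Rightarrow> (real \<Rightarrow> real \<Rightarrow> real) \<Rightarrow> bool" where
  "solves_lin f r T y \<eta> \<longleftrightarrow> classical_reg T \<eta> \<and>
     (\<forall>t\<in>{0..<T}. \<eta> 0 t = 0 \<and> \<eta> 1 t = 0) \<and>
     (\<forall>x\<in>{0<..<1}. \<forall>t\<in>{0<..<T}.
        deriv (\<lambda>s. \<eta> x s) t + deriv (\<lambda>\<xi>. deriv f (y \<xi> t) * \<eta> \<xi> t) x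
          = deriv (deriv (\<lambda>\<xi>. \<eta> \<xi> t)) x + deriv r (y x t) * \<eta> x t)"

definition H10 :: "(real \<Rightarrow> real) \<Rightarrow> bool" where
  "H10 v \<longleftrightarrow> (\<exists>g. g \<in> borel_measurable lborel \<and>
      set_integrable lborel {0..1} g \<and>
      set_integrable lborel {0..1} (\<lambda>x. (g x)^2) \<and>
      (\<forall>x\<in>{0..1}. v x = (\<integral>s\<in>{0..x}. g s \<partial>lborel))) \<and> v 0 = 0 \<and> v 1 = 0"

end

theory Submission
  imports Defs
begin

text \<open>
  First an a priori bound \<open>|y| \<le> M\<close> on \<open>[0,1] \<times> [0,T)\<close>, uniform over all solutions with
  \<open>|y(\<cdot>,0)| \<le> A\<close>. Put \<open>H(s) = \<integral>\<^sub>a\<^sup>s ds / (|r s| + 1)\<close>. At an interior spatial maximum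
  \<open>y\<^sub>x = 0\<close> and \<open>y\<^sub>x\<^sub>x \<le> 0\<close>, so \<open>y\<^sub>t \<le> r(y)\<close> and hence \<open>\<partial>\<^sub>t H(y) < 1\<close> there; the first time at which
  \<open>H(y) - t\<close> reaches \<open>H(A) + 1\<close> yields a contradiction, so \<open>H(max y(\<cdot>,t)) < H(A) + 1 + t\<close>.
  The divergence of \<open>\<integral> ds / (|r s| + 1)\<close> at \<open>+\<infinity>\<close> turns this into an upper bound for \<open>y\<close>;
  the same argument for \<open>-y\<close>, using the divergence at \<open>-\<infinity>\<close>, bounds \<open>y\<close> from below.

  Then let \<open>F\<close> and \<open>R\<close> bound \<open>|f'|\<close> and \<open>r'\<close> on \<open>[-M, M]\<close>. Testing the linearized equation with
  \<open>4\<eta>\<^sup>3\<close> and integrating by parts (the boundary terms vanish since \<open>\<eta> = 0\<close> at \<open>x = 0, 1\<close>) gives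
  \<open>d/dt \<integral>\<eta>\<^sup>4 = \<integral> -12\<eta>\<^sup>2\<eta>\<^sub>x\<^sup>2 + 12\<eta>\<^sup>3\<eta>\<^sub>x f'(y) + 4r'(y)\<eta>\<^sup>4 \<le> (3F\<^sup>2 + 4R) \<integral>\<eta>\<^sup>4\<close>,
  and Gronwall's inequality yields the claim with \<open>\<alpha> = (3F\<^sup>2 + 4R) / 2\<close>.
\<close>

definition classical_derivs ::
    "real \<Rightarrow> (real \<Rightarrow> real \<Rightarrow> real) \<Rightarrow> (real \<Rightarrow> real \<Rightarrow> real) \<Rightarrow> (real \<Rightarrow> real \<Rightarrow> real)
      \<Rightarrow> (real \<Rightarrow> real \<Rightarrow> real) \<Rightarrow> bool" where
  "classical_derivs T u ut ux uxx \<longleftrightarrow>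
     (\<forall>x\<in>{0..1}. \<forall>t\<in>{0<..<T}.
        ((\<lambda>s. u x s) has_real_derivative ut x t) (at t) \<and>
        ((\<lambda>\<xi>. u \<xi> t) has_real_derivative ux x t) (at x within {0..1}) \<and>
        ((\<lambda>\<xi>. ux \<xi> t) has_real_derivative uxx x t) (at x within {0..1}))"

lemma classical_regE:
  assumes "classical_reg T u"
  obtains ut ux uxx where "continuous_on ({0..1} \<times> {0..<T}) (\<lambda>(x,t). u x t)"
    "continuous_on ({0..1} \<times> {0<..<T}) (\<lambda>(x,t). ut x t)"
    "continuous_on ({0..1} \<times> {0<..<T}) (\<lambda>(x,t). ux x t)"
    "continuous_on ({0..1} \<times> {0<..<T}) (\<lambda>(x,t). uxx x t)"
    "classical_derivs T u ut ux uxx"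
  using assms unfolding classical_reg_def classical_derivs_def by blast

lemma classical_derivs_uminus:
  assumes "classical_derivs T u ut ux uxx"
  shows "classical_derivs T (\<lambda>x t. - u x t) (\<lambda>x t. - ut x t) (\<lambda>x t. - ux x t) (\<lambda>x t. - uxx x t)"
  using assms unfolding classical_derivs_def by (auto intro!: DERIV_minus)

lemma has_real_derivative_within_01_interior:
  assumes "(g has_real_derivative d) (at x within {0..1})" "0 < x" "x < (1::real)"
  shows "(g has_real_derivative d) (at x)"
  using assms by (simp add: at_within_Icc_at)

lemma classical_derivs_interior:
  assumes "classical_derivs T u ut ux uxx" "x \<in> {0<..<1}" "t \<in> {0<..<T}"
  shows "deriv (\<lambda>s. u x s) t = ut x t"
    and "((\<lambda>\<xi>. u \<xi> t) has_real_derivative ux x t) (at x)"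
    and "deriv (deriv (\<lambda>\<xi>. u \<xi> t)) x = uxx x t"
proof -
  have der: "((\<lambda>s. u \<xi> s) has_real_derivative ut \<xi> t) (at t) \<and>
      ((\<lambda>\<xi>. u \<xi> t) has_real_derivative ux \<xi> t) (at \<xi>) \<and>
      ((\<lambda>\<xi>. ux \<xi> t) has_real_derivative uxx \<xi> t) (at \<xi>)" if "\<xi> \<in> {0<..<1}" for \<xi>
    using assms(1,3) that unfolding classical_derivs_def
    by (auto intro: has_real_derivative_within_01_interior)
  show "deriv (\<lambda>s. u x s) t = ut x t" "((\<lambda>\<xi>. u \<xi> t) has_real_derivative ux x t) (at x)"
    using der[OF assms(2)] by (auto intro: DERIV_imp_deriv)
  have "eventually (\<lambda>\<xi>. \<xi> \<in> {0<..<1}) (nhds x)"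
    using assms(2) by (intro eventually_nhds_in_open) auto
  then have "eventually (\<lambda>\<xi>. deriv (\<lambda>\<xi>. u \<xi> t) \<xi> = ux \<xi> t) (nhds x)"
    by eventually_elim (use der in \<open>auto intro: DERIV_imp_deriv\<close>)
  then have "deriv (deriv (\<lambda>\<xi>. u \<xi> t)) x = deriv (\<lambda>\<xi>. ux \<xi> t) x"
    by (rule deriv_cong_ev) simp
  also have "\<dots> = uxx x t"
    using der[OF assms(2)] by (auto intro: DERIV_imp_deriv)
  finally show "deriv (deriv (\<lambda>\<xi>. u \<xi> t)) x = uxx x t" .
qed

lemma C2E:
  assumes "C2 f"
  obtains f' f'' where "\<And>x. (f has_real_derivative f' x) (at x)"
    "\<And>x. (f' has_real_derivative f'' x) (at x)" "continuous_on UNIV f''"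
    "continuous_on UNIV f'" "continuous_on UNIV f" "deriv f = f'"
proof -
  obtain f' f'' where d: "\<forall>x. (f has_real_derivative f' x) (at x)"
    "\<forall>x. (f' has_real_derivative f'' x) (at x)" "continuous_on UNIV f''"
    using assms unfolding C2_def by blast
  then have "continuous_on UNIV f'" "continuous_on UNIV f" "deriv f = f'"
    by (auto simp: fun_eq_iff intro!: continuous_at_imp_continuous_on DERIV_isCont DERIV_imp_deriv)
  with d that show ?thesis by blast
qed

lemma solves_y_pointwise:
  assumes "solves_y f r T y" and f': "\<And>s. (f has_real_derivative f' s) (at s)"
  obtains yt yx yxx where "continuous_on ({0..1} \<times> {0..<T}) (\<lambda>(x,t). y x t)"
    "continuous_on ({0..1} \<times> {0<..<T}) (\<lambda>(x,t). yx x t)"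
    "classical_derivs T y yt yx yxx" "\<forall>t\<in>{0..<T}. y 0 t = 0 \<and> y 1 t = 0"
    "\<forall>x\<in>{0<..<1}. \<forall>t\<in>{0<..<T}. yt x t + f' (y x t) * yx x t = yxx x t + r (y x t)"
proof -
  obtain yt yx yxx where reg: "continuous_on ({0..1} \<times> {0..<T}) (\<lambda>(x,t). y x t)"
      "continuous_on ({0..1} \<times> {0<..<T}) (\<lambda>(x,t). yx x t)" "classical_derivs T y yt yx yxx"
    using assms(1) unfolding solves_y_def by (auto elim: classical_regE)
  have "yt x t + f' (y x t) * yx x t = yxx x t + r (y x t)" if "x \<in> {0<..<1}" "t \<in> {0<..<T}" for x t
  proof -
    have "deriv (\<lambda>s. y x s) t + deriv (\<lambda>\<xi>. f (y \<xi> t)) x = deriv (deriv (\<lambda>\<xi>. y \<xi> t)) x + r (y x t)"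
      using assms(1) that unfolding solves_y_def by blast
    moreover have "deriv (\<lambda>\<xi>. f (y \<xi> t)) x = f' (y x t) * yx x t"
      by (intro DERIV_imp_deriv DERIV_chain2[OF f'] classical_derivs_interior(2)[OF reg(3) that])
    ultimately show ?thesis using classical_derivs_interior(1,3)[OF reg(3) that] by simp
  qed
  with that reg assms(1) show thesis by (auto simp: solves_y_def)
qed

lemma interior_max_derivs:
  fixes w w' w'' :: "real \<Rightarrow> real"
  assumes x0: "0 < x0" "x0 < 1"
    and d1: "\<forall>x\<in>{0..1}. (w has_real_derivative w' x) (at x within {0..1})"
    and d2: "(w' has_real_derivative w'' x0) (at x0 within {0..1})"
    and max: "\<forall>x\<in>{0..1}. w x \<le> w x0"
  shows "w' x0 = 0" and "w'' x0 \<le> 0"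
proof -
  have dw: "(w has_real_derivative w' x) (at x)" if "0 < x" "x < 1" for x
    using d1 that by (intro has_real_derivative_within_01_interior) auto
  have dw': "(w' has_real_derivative w'' x0) (at x0)"
    using d2 x0 by (intro has_real_derivative_within_01_interior)
  show w'0: "w' x0 = 0"
  proof (rule DERIV_local_max[OF dw[OF x0]])
    show "0 < min x0 (1 - x0)" using x0 by simp
    show "\<forall>y. \<bar>x0 - y\<bar> < min x0 (1 - x0) \<longrightarrow> w y \<le> w x0"
      using max by (auto simp: abs_if split: if_splits)
  qed
  show "w'' x0 \<le> 0"
  proof (rule ccontr)
    assume "\<not> w'' x0 \<le> 0"
    then obtain d where d: "d > 0" "\<forall>h>0. h < d \<longrightarrow> w' x0 < w' (x0 + h)"
      using DERIV_pos_inc_right[OF dw'] by force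
    define h where "h = min d (1 - x0) / 2"
    have h: "h > 0" "h < d" "x0 + h < 1"
      using d x0 unfolding h_def by (auto simp: min_def field_simps)
    obtain z where z: "x0 < z" "z < x0 + h" "w (x0 + h) - w x0 = h * w' z"
      using MVT2[of x0 "x0 + h" w w'] h x0 dw by force
    \<comment> \<open>\<open>w'\<close> is positive just right of the critical point, so \<open>w\<close> increases there.\<close>
    have "w' z > 0" using d(2)[rule_format, of "z - x0"] z w'0 h by auto
    then have "h * w' z > 0" using h(1) by simp
    then have "w (x0 + h) > w x0" using z(3) by simp
    then show False using max[rule_format, of "x0 + h"] h x0 by auto
  qed
qed

lemma has_real_derivative_nonneg_left_max:
  fixes g :: "real \<Rightarrow> real"
  assumes "(g has_real_derivative D) (at t0)" "\<forall>s\<in>{a<..<t0}. g s \<le> g t0" "a < t0"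
  shows "D \<ge> 0"
proof (rule ccontr)
  assume "\<not> D \<ge> 0"
  then obtain d where d: "d > 0" "\<forall>h>0. h < d \<longrightarrow> g t0 < g (t0 - h)"
    using DERIV_neg_dec_left[OF assms(1)] by force
  define h where "h = min d (t0 - a) / 2"
  have "h > 0" "h < d" "h < t0 - a" using d assms(3) by (auto simp: h_def min_def)
  then show False
    using d(2)[rule_format, of h] assms(2)[rule_format, of "t0 - h"] by auto
qed

lemma first_crossing_time:
  fixes \<phi> :: "'a::t2_space \<times> real \<Rightarrow> real"
  assumes X: "compact X" and cont: "continuous_on (X \<times> {0..t1}) \<phi>"
    and below: "\<forall>x\<in>X. \<phi> (x, 0) < c" and x1: "x1 \<in> X" "0 \<le> t1" "\<phi> (x1, t1) \<ge> c"
  obtains x0 t0 where "x0 \<in> X" "0 < t0" "t0 \<le> t1" "\<phi> (x0, t0) = c"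
    "\<forall>x\<in>X. \<forall>t\<in>{0..<t0}. \<phi> (x, t) < c" "\<forall>x\<in>X. \<phi> (x, t0) \<le> c"
proof -
  define K where "K = (X \<times> {0..t1}) \<inter> \<phi> -` {c..}"
  have "compact (X \<times> {0..t1})" using X by (simp add: compact_Times)
  moreover have "closed K"
    unfolding K_def using compact_imp_closed[OF \<open>compact (X \<times> {0..t1})\<close>]
    by (intro continuous_closed_preimage cont) auto
  ultimately have "compact K"
    using compact_Int_closed[of "X \<times> {0..t1}" K] by (simp add: K_def Int_assoc)
  moreover have "(x1, t1) \<in> K" using x1 by (simp add: K_def)
  ultimately obtain p0 where p0: "p0 \<in> K" "\<forall>q\<in>K. snd p0 \<le> snd q"
    using continuous_attains_inf[of K snd] continuous_on_snd[OF continuous_on_id] by blast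
  obtain x0 t0 where xt0: "p0 = (x0, t0)" by (cases p0)
  have x0: "x0 \<in> X" and t0: "0 \<le> t0" "t0 \<le> t1" and ge: "\<phi> (x0, t0) \<ge> c"
    using p0 xt0 by (auto simp: K_def)
  have before: "\<forall>x\<in>X. \<forall>t\<in>{0..<t0}. \<phi> (x, t) < c"
    using p0(2) xt0 t0 by (force simp: K_def)
  have t0pos: "0 < t0" using below x0 ge t0 by (cases "t0 = 0") auto
  have at_t0: "\<phi> (x, t0) \<le> c" if x: "x \<in> X" for x
  proof -
    have "continuous_on {0..t1} (\<lambda>s. \<phi> (x, s))"
      by (rule continuous_on_compose2[OF cont]) (use x in \<open>auto intro!: continuous_intros\<close>)
    then have "((\<lambda>s. \<phi> (x, s)) \<longlongrightarrow> \<phi> (x, t0)) (at t0 within {0..t1})"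
      using t0 by (simp add: continuous_on_def)
    then have "((\<lambda>s. \<phi> (x, s)) \<longlongrightarrow> \<phi> (x, t0)) (at t0 within {0..t0})"
      by (rule tendsto_within_subset) (use t0 in auto)
    then have "((\<lambda>s. \<phi> (x, s)) \<longlongrightarrow> \<phi> (x, t0)) (at_left t0)"
      using at_within_Icc_at_left[of 0 t0] t0pos by simp
    moreover have "eventually (\<lambda>s. \<phi> (x, s) \<le> c) (at_left t0)"
      using eventually_at_left_real[OF t0pos]
      by eventually_elim (use before x in \<open>auto intro: less_imp_le\<close>)
    ultimately show ?thesis by (rule tendsto_upperbound) simp
  qed
  show thesis
    using that[OF x0 t0pos t0(2) _ before] at_t0 ge x0 by (simp add: antisym)
qed

lemma spatial_max_time_deriv_le:
  fixes u ut ux uxx :: "real \<Rightarrow> real \<Rightarrow> real" and \<rho> :: "real \<Rightarrow> real"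
  assumes der: "classical_derivs T u ut ux uxx"
    and bd: "\<forall>t\<in>{0..<T}. u 0 t = 0 \<and> u 1 t = 0"
    and key: "\<forall>x\<in>{0<..<1}. \<forall>t\<in>{0<..<T}. ux x t = 0 \<longrightarrow> uxx x t \<le> 0 \<longrightarrow> ut x t \<le> \<rho> (u x t)"
    and t0: "t0 \<in> {0<..<T}" and x0: "x0 \<in> {0..1}" "u x0 t0 \<noteq> 0"
    and max: "\<forall>x\<in>{0..1}. u x t0 \<le> u x0 t0"
  shows "ut x0 t0 \<le> \<rho> (u x0 t0)"
proof -
  have x0i: "0 < x0" "x0 < 1" using bd t0 x0 by (auto simp: less_le)
  have "ux x0 t0 = 0" "uxx x0 t0 \<le> 0"
    using interior_max_derivs[OF x0i, where w = "\<lambda>\<xi>. u \<xi> t0" and w' = "\<lambda>\<xi>. ux \<xi> t0"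
        and w'' = "\<lambda>\<xi>. uxx \<xi> t0"] der x0 t0 max
    unfolding classical_derivs_def by auto
  then show ?thesis using key x0i t0 by auto
qed

lemma max_principle_comparison:
  fixes u ut ux uxx :: "real \<Rightarrow> real \<Rightarrow> real" and H h \<rho> :: "real \<Rightarrow> real"
  assumes cont: "continuous_on ({0..1} \<times> {0..<T}) (\<lambda>(x,t). u x t)"
    and der: "classical_derivs T u ut ux uxx"
    and bd: "\<forall>t\<in>{0..<T}. u 0 t = 0 \<and> u 1 t = 0"
    and init: "\<forall>x\<in>{0..1}. u x 0 \<le> A"
    and key: "\<forall>x\<in>{0<..<1}. \<forall>t\<in>{0<..<T}. ux x t = 0 \<longrightarrow> uxx x t \<le> 0 \<longrightarrow> ut x t \<le> \<rho> (u x t)"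
    and t1: "0 \<le> t1" "t1 < T"
    and ab: "a < 0" "0 \<le> A" "A < b"
    and range: "\<forall>x\<in>{0..1}. \<forall>t\<in>{0..t1}. a < u x t \<and> u x t < b"
    and Hc: "continuous_on {a..b} H"
    and Hd: "\<forall>s\<in>{a<..<b}. (H has_real_derivative h s) (at s) \<and> h s > 0 \<and> h s * \<rho> s < 1"
  shows "\<forall>x\<in>{0..1}. H (u x t1) < t1 + H A + 1"
proof (rule ccontr)
  assume "\<not> ?thesis"
  then obtain x1 where x1: "x1 \<in> {0..1}" "H (u x1 t1) \<ge> t1 + H A + 1" by force
  have Hless: "H s < H s'" if "a < s" "s < s'" "s' < b" for s s'
    by (rule DERIV_pos_imp_increasing[OF that(2)]) (use Hd that in force)
  have Hle: "H s \<le> H s'" if "a < s" "s \<le> s'" "s' < b" for s s'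
    using Hless[of s s'] that by (cases "s = s'") auto
  define \<phi> where "\<phi> = (\<lambda>p. H (u (fst p) (snd p)) - snd p)"
  have "continuous_on ({0..1} \<times> {0..t1}) (\<lambda>p. u (fst p) (snd p))"
    by (rule continuous_on_subset[OF cont[unfolded case_prod_beta]]) (use t1 in auto)
  moreover have "(\<lambda>p. u (fst p) (snd p)) ` ({0..1} \<times> {0..t1}) \<subseteq> {a..b}"
    using range by (force simp: less_imp_le)
  ultimately have "continuous_on ({0..1} \<times> {0..t1}) \<phi>"
    unfolding \<phi>_def by (intro continuous_intros continuous_on_compose2[OF Hc])
  moreover have "\<forall>x\<in>{0..1}. \<phi> (x, 0) < H A + 1"
  proof
    fix x :: real assume "x \<in> {0..1}"
    then have "H (u x 0) \<le> H A" using Hle[of "u x 0" A] range init t1 ab by auto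
    then show "\<phi> (x, 0) < H A + 1" by (simp add: \<phi>_def)
  qed
  ultimately obtain x0 t0 where x0: "x0 \<in> {0..1}" and t0: "0 < t0" "t0 \<le> t1"
    and eq: "\<phi> (x0, t0) = H A + 1" and before: "\<forall>x\<in>{0..1}. \<forall>t\<in>{0..<t0}. \<phi> (x, t) < H A + 1"
    and at_t0: "\<forall>x\<in>{0..1}. \<phi> (x, t0) \<le> H A + 1"
    using first_crossing_time[of "{0..1}" t1 \<phi> "H A + 1" x1] x1 t1 by (auto simp: \<phi>_def)
  define v where "v = u x0 t0"
  have v: "a < v" "v < b" and t0T: "t0 \<in> {0<..<T}" using range x0 t0 t1 by (auto simp: v_def)
  have umax: "u x t0 \<le> v" if x: "x \<in> {0..1}" for x
  proof (rule ccontr)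
    assume "\<not> u x t0 \<le> v"
    then have "H v < H (u x t0)" using Hless v range x t0 by auto
    then show False using at_t0[rule_format, OF x] eq by (simp add: \<phi>_def v_def)
  qed
  have "H 0 \<le> H A" using Hle ab by simp
  then have "v \<noteq> 0" using eq t0 by (auto simp: \<phi>_def v_def)
  then have ut: "ut x0 t0 \<le> \<rho> v"
    using spatial_max_time_deriv_le[OF der bd key t0T x0] umax by (simp add: v_def)
  have "((\<lambda>s. u x0 s) has_real_derivative ut x0 t0) (at t0)"
    using der x0 t0T by (auto simp: classical_derivs_def)
  then have "((\<lambda>s. \<phi> (x0, s)) has_real_derivative h v * ut x0 t0 - 1) (at t0)"
    unfolding \<phi>_def using Hd v by (auto simp: v_def intro!: derivative_eq_intros DERIV_chain2[of H])
  moreover have "\<forall>s\<in>{0<..<t0}. \<phi> (x0, s) \<le> \<phi> (x0, t0)"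
    using before[rule_format, OF x0] eq by (auto intro: less_imp_le)
  ultimately have "h v * ut x0 t0 - 1 \<ge> 0"
    using t0(1) by (rule has_real_derivative_nonneg_left_max)
  moreover have "h v > 0" "h v * \<rho> v < 1" using Hd v by auto
  ultimately show False using ut mult_left_mono[of "ut x0 t0" "\<rho> v" "h v"] by linarith
qed

lemma integral_exceeds_if_nn_integral_infinite:
  fixes g :: "real \<Rightarrow> real"
  assumes gc: "continuous_on UNIV g" and gpos: "\<And>s. g s \<ge> 0"
    and inf: "(\<integral>\<^sup>+ s. ennreal (indicator {0..} s * g s) \<partial>lborel) = \<infinity>" and A: "A \<ge> 0"
  obtains N where "N \<ge> A" "integral {A..N} g \<ge> B"
proof -
  define F where "F = (\<lambda>n s. ennreal (indicator {0..real n} s * g s))"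
  have [measurable]: "g \<in> borel_measurable borel"
    using gc by (rule borel_measurable_continuous_onI)
  have intg: "g integrable_on {a..b}" for a b
    by (intro integrable_continuous_interval continuous_on_subset[OF gc]) auto
  have F_eq: "integral\<^sup>N lborel (F n) = ennreal (integral {0..real n} g)" for n
    unfolding F_def using gpos intg by (intro nn_integral_has_integral_lebesgue) auto
  have "(\<lambda>n. integral\<^sup>N lborel (F n)) \<longlonglongrightarrow> (\<integral>\<^sup>+ s. ennreal (indicator {0..} s * g s) \<partial>lborel)"
  proof (rule nn_integral_LIMSEQ)
    show "incseq F"
      unfolding incseq_Suc_iff le_fun_def F_def
      using gpos by (auto simp: indicator_def intro!: ennreal_leI)
    show "F n \<in> borel_measurable lborel" for n
      unfolding F_def by measurable
    show "(\<lambda>n. F n s) \<longlonglongrightarrow> ennreal (indicator {0..} s * g s)" for s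
    proof (rule tendsto_eventually)
      obtain n0 :: nat where "s \<le> real n0" using real_arch_simple by blast
      then show "\<forall>\<^sub>F n in sequentially. F n s = ennreal (indicator {0..} s * g s)"
        unfolding F_def eventually_sequentially
        by (intro exI[of _ n0]) (auto simp: indicator_def)
    qed
  qed
  then have "(\<lambda>n. ennreal (integral {0..real n} g)) \<longlonglongrightarrow> \<infinity>" using inf by (simp add: F_eq)
  then have "\<forall>\<^sub>F n in sequentially. ennreal (max 0 (B + integral {0..A} g)) < ennreal (integral {0..real n} g)"
    by (rule order_tendstoD) simp
  then obtain n :: nat where "B + integral {0..A} g < integral {0..real n} g"
    by (auto simp: ennreal_less_iff eventually_sequentially)
  moreover define N where "N = max (real n) A"
  moreover have "integral {0..real n} g \<le> integral {0..N} g"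
    by (rule integral_subset_le) (auto simp: N_def intg gpos)
  moreover have "integral {0..A} g + integral {A..N} g = integral {0..N} g"
    by (rule Henstock_Kurzweil_Integration.integral_combine[OF A _ intg]) (simp add: N_def)
  ultimately show thesis using that[of N] by (simp add: N_def)
qed

lemma max_principle_upper_bound:
  fixes u ut ux uxx :: "real \<Rightarrow> real \<Rightarrow> real" and \<rho> :: "real \<Rightarrow> real"
  assumes cont: "continuous_on ({0..1} \<times> {0..<T}) (\<lambda>(x,t). u x t)"
    and der: "classical_derivs T u ut ux uxx"
    and bd: "\<forall>t\<in>{0..<T}. u 0 t = 0 \<and> u 1 t = 0"
    and init: "\<forall>x\<in>{0..1}. u x 0 \<le> A"
    and key: "\<forall>x\<in>{0<..<1}. \<forall>t\<in>{0<..<T}. ux x t = 0 \<longrightarrow> uxx x t \<le> 0 \<longrightarrow> ut x t \<le> \<rho> (u x t)"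
    and A: "0 \<le> A" and \<rho>c: "continuous_on UNIV \<rho>"
    and N: "N \<ge> A" "integral {A..N} (\<lambda>s. 1 / (\<bar>\<rho> s\<bar> + 1)) \<ge> T + 1"
  shows "\<forall>x\<in>{0..1}. \<forall>t\<in>{0..<T}. u x t < N"
proof (intro ballI)
  fix x t assume x: "x \<in> {0..1::real}" and t: "t \<in> {0..<T}"
  have "compact ((\<lambda>p. u (fst p) (snd p)) ` ({0..1} \<times> {0..t}))"
    by (intro compact_continuous_image continuous_on_subset[OF cont[unfolded case_prod_beta]])
       (use t in \<open>auto intro: compact_Times\<close>)
  then have "bounded ((\<lambda>p. u (fst p) (snd p)) ` ({0..1} \<times> {0..t}))" by (rule compact_imp_bounded)
  then obtain L where "\<forall>z\<in>(\<lambda>p. u (fst p) (snd p)) ` ({0..1} \<times> {0..t}). norm z \<le> L"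
    unfolding bounded_iff by blast
  then have L: "\<forall>x\<in>{0..1}. \<forall>s\<in>{0..t}. \<bar>u x s\<bar> \<le> L" by auto
  define a where "a = - \<bar>L\<bar> - 1"
  define b where "b = \<bar>L\<bar> + A + N + 1"
  define g where "g = (\<lambda>s. 1 / (\<bar>\<rho> s\<bar> + 1))"
  define H where "H = (\<lambda>s. integral {a..s} g)"
  have gc: "continuous_on UNIV g" unfolding g_def
    by (intro continuous_intros \<rho>c) (auto simp: add_nonneg_eq_0_iff)
  have gpos: "g s > 0" for s by (simp add: g_def add_pos_nonneg)
  have intg: "g integrable_on {c..d}" for c d
    by (intro integrable_continuous_interval continuous_on_subset[OF gc]) auto
  have Hc: "continuous_on {a..b} H" unfolding H_def by (rule indefinite_integral_continuous_1[OF intg])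
  have Hd: "\<forall>s\<in>{a<..<b}. (H has_real_derivative g s) (at s) \<and> g s > 0 \<and> g s * \<rho> s < 1"
  proof
    fix s assume s: "s \<in> {a<..<b}"
    have "(H has_real_derivative g s) (at s within {a..b})"
      unfolding H_def by (rule integral_has_real_derivative[OF continuous_on_subset[OF gc]]) (use s in auto)
    moreover have "at s within {a..b} = at s" using s by (intro at_within_Icc_at) auto
    moreover have "g s * \<rho> s < 1" by (simp add: g_def divide_simps) (smt (verit))
    ultimately show "(H has_real_derivative g s) (at s) \<and> g s > 0 \<and> g s * \<rho> s < 1"
      using gpos by simp
  qed
  have range: "\<forall>x\<in>{0..1}. \<forall>s\<in>{0..t}. a < u x s \<and> u x s < b"
    using L N A by (force simp: a_def b_def)
  have "\<forall>x\<in>{0..1}. H (u x t) < t + H A + 1"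
    by (rule max_principle_comparison[OF cont der bd init key _ _ _ A _ range Hc Hd]) (use t N A in \<open>auto simp: a_def b_def\<close>)
  then have lt: "H (u x t) < t + H A + 1" using x by blast
  show "u x t < N"
  proof (rule ccontr)
    assume "\<not> u x t < N"
    then have uN: "u x t \<ge> N" by simp
    have "H A + integral {A..u x t} g = H (u x t)"
      unfolding H_def by (rule Henstock_Kurzweil_Integration.integral_combine[OF _ _ intg])
        (use uN N A in \<open>auto simp: a_def\<close>)
    moreover have "integral {A..N} g \<le> integral {A..u x t} g"
      by (rule integral_subset_le) (use uN gpos in \<open>auto simp: intg less_imp_le\<close>)
    ultimately show False using lt N(2) t by (simp add: g_def)
  qed
qed

lemma max_principle_uniform_bound:
  fixes \<rho> :: "real \<Rightarrow> real"
  assumes \<rho>c: "continuous_on UNIV \<rho>"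
    and inf: "(\<integral>\<^sup>+ s. ennreal (indicator {0..} s / (\<bar>\<rho> s\<bar> + 1)) \<partial>lborel) = \<infinity>" and A: "A \<ge> 0"
  obtains N where "\<And>u ut ux uxx. continuous_on ({0..1} \<times> {0..<T}) (\<lambda>(x,t). u x t) \<Longrightarrow>
      classical_derivs T u ut ux uxx \<Longrightarrow> \<forall>t\<in>{0..<T}. u 0 t = 0 \<and> u 1 t = 0 \<Longrightarrow>
      \<forall>x\<in>{0..1}. u x 0 \<le> A \<Longrightarrow>
      \<forall>x\<in>{0<..<1}. \<forall>t\<in>{0<..<T}. ux x t = 0 \<longrightarrow> uxx x t \<le> 0 \<longrightarrow> ut x t \<le> \<rho> (u x t) \<Longrightarrow>
      \<forall>x\<in>{0..1}. \<forall>t\<in>{0..<T}. u x t < N"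
proof -
  have gc: "continuous_on UNIV (\<lambda>s. 1 / (\<bar>\<rho> s\<bar> + 1))"
    by (intro continuous_intros \<rho>c) (auto simp: add_nonneg_eq_0_iff)
  have g0: "\<And>s. 0 \<le> 1 / (\<bar>\<rho> s\<bar> + 1)" by simp
  have "(\<integral>\<^sup>+ s. ennreal (indicator {0..} s * (1 / (\<bar>\<rho> s\<bar> + 1))) \<partial>lborel) = \<infinity>"
    using inf by simp
  then obtain N where N: "N \<ge> A" "integral {A..N} (\<lambda>s. 1 / (\<bar>\<rho> s\<bar> + 1)) \<ge> T + 1"
    by (rule integral_exceeds_if_nn_integral_infinite[OF gc g0 _ A])
  show thesis by (rule that, rule max_principle_upper_bound[OF _ _ _ _ _ A \<rho>c N])
qed

lemma solves_y_bounded: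
  assumes "C2 f" "C2 r"
    and inf_neg: "(\<integral>\<^sup>+ s. ennreal (indicator {..0} s / (\<bar>r s\<bar> + 1)) \<partial>lborel) = \<infinity>"
    and inf_pos: "(\<integral>\<^sup>+ s. ennreal (indicator {0..} s / (\<bar>r s\<bar> + 1)) \<partial>lborel) = \<infinity>"
    and A: "A \<ge> 0"
  obtains M where "\<And>y. solves_y f r T y \<Longrightarrow> \<forall>x\<in>{0..1}. \<bar>y x 0\<bar> \<le> A \<Longrightarrow>
    \<forall>x\<in>{0..1}. \<forall>t\<in>{0..<T}. \<bar>y x t\<bar> \<le> M"
proof -
  obtain f' where f': "\<And>s. (f has_real_derivative f' s) (at s)" using C2E[OF assms(1)] by metis
  have rc: "continuous_on UNIV r" using C2E[OF assms(2)] by metis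
  \<comment> \<open>Lower bounds for \<open>y\<close> are upper bounds for \<open>-y\<close>, whose reaction term is \<open>\<rho>\<close>.\<close>
  define \<rho> where "\<rho> = (\<lambda>s. - r (- s))"
  have \<rho>c: "continuous_on UNIV \<rho>"
    unfolding \<rho>_def by (intro continuous_intros continuous_on_compose2[OF rc]) auto
  have [measurable]: "r \<in> borel_measurable borel" using rc by (rule borel_measurable_continuous_onI)
  define F where "F = (\<lambda>s. ennreal (indicator {..0} s / (\<bar>r s\<bar> + 1)))"
  have "F \<in> borel_measurable borel" unfolding F_def by measurable
  from nn_integral_real_affine[OF this, of "-1" 0]
  have "integral\<^sup>N lborel F = (\<integral>\<^sup>+ s. F (- s) \<partial>lborel)" by simp
  also have "(\<lambda>s. F (- s)) = (\<lambda>s. ennreal (indicator {0..} s / (\<bar>\<rho> s\<bar> + 1)))"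
    by (auto simp: F_def \<rho>_def indicator_def fun_eq_iff)
  finally have inf_\<rho>: "(\<integral>\<^sup>+ s. ennreal (indicator {0..} s / (\<bar>\<rho> s\<bar> + 1)) \<partial>lborel) = \<infinity>"
    using inf_neg by (simp add: F_def)
  obtain N2 where N2: "\<And>u ut ux uxx. continuous_on ({0..1} \<times> {0..<T}) (\<lambda>(x,t). u x t) \<Longrightarrow>
      classical_derivs T u ut ux uxx \<Longrightarrow> \<forall>t\<in>{0..<T}. u 0 t = 0 \<and> u 1 t = 0 \<Longrightarrow>
      \<forall>x\<in>{0..1}. u x 0 \<le> A \<Longrightarrow>
      \<forall>x\<in>{0<..<1}. \<forall>t\<in>{0<..<T}. ux x t = 0 \<longrightarrow> uxx x t \<le> 0 \<longrightarrow> ut x t \<le> \<rho> (u x t) \<Longrightarrow>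
      \<forall>x\<in>{0..1}. \<forall>t\<in>{0..<T}. u x t < N2"
    using max_principle_uniform_bound[OF \<rho>c inf_\<rho> A] by blast
  obtain N1 where N1: "\<And>u ut ux uxx. continuous_on ({0..1} \<times> {0..<T}) (\<lambda>(x,t). u x t) \<Longrightarrow>
      classical_derivs T u ut ux uxx \<Longrightarrow> \<forall>t\<in>{0..<T}. u 0 t = 0 \<and> u 1 t = 0 \<Longrightarrow>
      \<forall>x\<in>{0..1}. u x 0 \<le> A \<Longrightarrow>
      \<forall>x\<in>{0<..<1}. \<forall>t\<in>{0<..<T}. ux x t = 0 \<longrightarrow> uxx x t \<le> 0 \<longrightarrow> ut x t \<le> r (u x t) \<Longrightarrow>
      \<forall>x\<in>{0..1}. \<forall>t\<in>{0..<T}. u x t < N1"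
    using max_principle_uniform_bound[OF rc inf_pos A] by blast
  show thesis
  proof (rule that[of "max N1 N2"])
    fix y assume sy: "solves_y f r T y" and iy: "\<forall>x\<in>{0..1}. \<bar>y x 0\<bar> \<le> A"
    obtain yt yx yxx where cont: "continuous_on ({0..1} \<times> {0..<T}) (\<lambda>(x,t). y x t)"
      and der: "classical_derivs T y yt yx yxx" and bd: "\<forall>t\<in>{0..<T}. y 0 t = 0 \<and> y 1 t = 0"
      and pde: "\<forall>x\<in>{0<..<1}. \<forall>t\<in>{0<..<T}. yt x t + f' (y x t) * yx x t = yxx x t + r (y x t)"
      using solves_y_pointwise[OF sy f'] by metis
    have yt: "yt x t = yxx x t + r (y x t) - f' (y x t) * yx x t"
      if "x \<in> {0<..<1}" "t \<in> {0<..<T}" for x t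
      using pde[rule_format, OF that] by (simp add: algebra_simps)
    have "\<forall>x\<in>{0..1}. \<forall>t\<in>{0..<T}. y x t < N1"
      by (rule N1[OF cont der bd]) (use iy yt in \<open>auto simp: abs_le_iff\<close>)
    moreover have "\<forall>x\<in>{0..1}. \<forall>t\<in>{0..<T}. - y x t < N2"
    proof (rule N2[OF _ classical_derivs_uminus[OF der]])
      show "continuous_on ({0..1} \<times> {0..<T}) (\<lambda>(x,t). - y x t)"
        using continuous_on_minus[OF cont] by (simp add: case_prod_beta)
    qed (use iy yt bd in \<open>auto simp: \<rho>_def abs_le_iff\<close>)
    ultimately show "\<forall>x\<in>{0..1}. \<forall>t\<in>{0..<T}. \<bar>y x t\<bar> \<le> max N1 N2" by fastforce
  qed
qed

lemma has_integral_cube_mult_vanishing: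
  fixes e e' w w' :: "real \<Rightarrow> real"
  assumes e: "\<And>\<xi>. \<xi> \<in> {a..b} \<Longrightarrow> (e has_real_derivative e' \<xi>) (at \<xi> within {a..b})"
    and w: "\<And>\<xi>. \<xi> \<in> {a..b} \<Longrightarrow> (w has_real_derivative w' \<xi>) (at \<xi> within {a..b})"
    and "a \<le> b" "e a = 0" "e b = 0"
  shows "((\<lambda>\<xi>. 3 * (e \<xi>)^2 * e' \<xi> * w \<xi> + (e \<xi>)^3 * w' \<xi>) has_integral 0) {a..b}"
proof -
  have "((\<lambda>\<xi>. 3 * (e \<xi>)^2 * e' \<xi> * w \<xi> + (e \<xi>)^3 * w' \<xi>) has_integral
      (e b)^3 * w b - (e a)^3 * w a) {a..b}"
  proof (rule fundamental_theorem_of_calculus[of a b "\<lambda>\<xi>. (e \<xi>)^3 * w \<xi>",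
      simplified has_real_derivative_iff_has_vector_derivative[symmetric]])
    fix \<xi> assume \<xi>: "\<xi> \<in> {a..b}"
    show "((\<lambda>\<xi>. (e \<xi>)^3 * w \<xi>) has_real_derivative 3 * (e \<xi>)^2 * e' \<xi> * w \<xi> + (e \<xi>)^3 * w' \<xi>)
        (at \<xi> within {a..b})"
      using DERIV_mult[OF DERIV_power[OF e[OF \<xi>], of 3] w[OF \<xi>]] by (simp add: algebra_simps)
  qed (rule \<open>a \<le> b\<close>)
  then show ?thesis using assms(4,5) by simp
qed

lemma cubic_energy_pointwise_bound:
  fixes e d p q F R :: real
  assumes "\<bar>p\<bar> \<le> F" "q \<le> R"
  shows "- 12 * e^2 * d^2 + 12 * e^3 * d * p + 4 * q * e^4 \<le> (3 * F^2 + 4 * R) * (e^2)^2"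
proof -
  \<comment> \<open>Complete the square in \<open>d\<close>.\<close>
  have "- 12 * e^2 * d^2 + 12 * e^3 * d * p + 4 * q * e^4
      = 3 * p^2 * e^4 + 4 * q * e^4 - 3 * e^2 * (2 * d - p * e)^2"
    by algebra
  also have "\<dots> \<le> 3 * p^2 * e^4 + 4 * q * e^4" by simp
  also have "\<dots> \<le> 3 * F^2 * e^4 + 4 * R * e^4"
    using assms abs_le_square_iff[of p F] by (intro add_mono mult_right_mono) auto
  finally show ?thesis by (simp add: algebra_simps)
qed

lemma linearized_energy_inequality:
  fixes e e' e'' et Y Y' f' f'' r' :: "real \<Rightarrow> real"
  assumes ec: "continuous_on {0..1} e" and e'c: "continuous_on {0..1} e'"
    and e''c: "continuous_on {0..1} e''" and Yc: "continuous_on {0..1} Y"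
    and Y'c: "continuous_on {0..1} Y'"
    and ed: "\<And>\<xi>. \<xi> \<in> {0..1} \<Longrightarrow> (e has_real_derivative e' \<xi>) (at \<xi> within {0..1})"
    and e'd: "\<And>\<xi>. \<xi> \<in> {0..1} \<Longrightarrow> (e' has_real_derivative e'' \<xi>) (at \<xi> within {0..1})"
    and Yd: "\<And>\<xi>. \<xi> \<in> {0..1} \<Longrightarrow> (Y has_real_derivative Y' \<xi>) (at \<xi> within {0..1})"
    and e01: "e 0 = 0" "e 1 = 0"
    and f'd: "\<And>s. (f' has_real_derivative f'' s) (at s)"
    and f''c: "continuous_on UNIV f''" and r'c: "continuous_on UNIV r'"
    and pde: "\<And>\<xi>. \<xi> \<in> {0<..<1} \<Longrightarrow>
      et \<xi> + (f'' (Y \<xi>) * Y' \<xi> * e \<xi> + f' (Y \<xi>) * e' \<xi>) = e'' \<xi> + r' (Y \<xi>) * e \<xi>"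
    and F: "\<And>\<xi>. \<xi> \<in> {0..1} \<Longrightarrow> \<bar>f' (Y \<xi>)\<bar> \<le> F"
    and R: "\<And>\<xi>. \<xi> \<in> {0..1} \<Longrightarrow> r' (Y \<xi>) \<le> R"
  shows "integral {0..1} (\<lambda>\<xi>. 4 * (e \<xi>)^3 * et \<xi>) \<le> (3 * F^2 + 4 * R) * integral {0..1} (\<lambda>\<xi>. ((e \<xi>)^2)^2)"
proof -
  have f'c: "continuous_on UNIV f'"
    using f'd by (auto intro!: continuous_at_imp_continuous_on DERIV_isCont)
  have comp_c: "continuous_on {0..1} (\<lambda>\<xi>. g (Y \<xi>))" if "continuous_on UNIV g" for g
    by (rule continuous_on_compose2[OF that Yc]) auto
  define Q where "Q = (\<lambda>\<xi>. f' (Y \<xi>) * e \<xi>)"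
  define Q' where "Q' = (\<lambda>\<xi>. f'' (Y \<xi>) * Y' \<xi> * e \<xi> + f' (Y \<xi>) * e' \<xi>)"
  have Qd: "(Q has_real_derivative Q' \<xi>) (at \<xi> within {0..1})" if "\<xi> \<in> {0..1}" for \<xi>
    using DERIV_mult[OF DERIV_chain2[OF f'd Yd[OF that]] ed[OF that]]
    by (simp add: Q_def Q'_def algebra_simps)
  define G where "G = (\<lambda>\<xi>. 4 * (e \<xi>)^3 * (e'' \<xi> - Q' \<xi> + r' (Y \<xi>) * e \<xi>))"
  have "continuous_on {0..1} G"
    unfolding G_def Q'_def by (intro continuous_intros ec e'c e''c Y'c comp_c f'c f''c r'c)
  then have G: "(G has_integral integral {0..1} G) {0..1}"
    by (intro integrable_integral integrable_continuous_interval)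
  have "((\<lambda>\<xi>. 4 * (e \<xi>)^3 * et \<xi>) has_integral integral {0..1} G) {0..1}"
  proof (rule has_integral_spike_finite[OF _ _ G, of "{0,1}"])
    fix \<xi> :: real assume "\<xi> \<in> {0..1} - {0,1}"
    then have "et \<xi> = e'' \<xi> - Q' \<xi> + r' (Y \<xi>) * e \<xi>"
      using pde[of \<xi>] by (auto simp: Q'_def algebra_simps less_le)
    then show "4 * (e \<xi>)^3 * et \<xi> = G \<xi>" by (simp add: G_def)
  qed simp
  then have lhs: "integral {0..1} (\<lambda>\<xi>. 4 * (e \<xi>)^3 * et \<xi>) = integral {0..1} G"
    by (rule integral_unique)
  \<comment> \<open>Integrating by parts twice, against \<open>e'\<close> and against \<open>Q\<close>, removes \<open>e''\<close> and \<open>Q'\<close>.\<close>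
  have "((\<lambda>\<xi>. G \<xi> - 4 * (3 * (e \<xi>)^2 * e' \<xi> * e' \<xi> + (e \<xi>)^3 * e'' \<xi>)
        + 4 * (3 * (e \<xi>)^2 * e' \<xi> * Q \<xi> + (e \<xi>)^3 * Q' \<xi>)) has_integral
        integral {0..1} G - 4 * 0 + 4 * 0) {0..1}"
    by (intro has_integral_add has_integral_diff has_integral_mult_right G
        has_integral_cube_mult_vanishing[where e = e] ed e'd Qd e01) auto
  moreover have "((\<lambda>\<xi>. (3 * F^2 + 4 * R) * ((e \<xi>)^2)^2) has_integral
       (3 * F^2 + 4 * R) * integral {0..1} (\<lambda>\<xi>. ((e \<xi>)^2)^2)) {0..1}"
    by (intro has_integral_mult_right integrable_integral integrable_continuous_interval
        continuous_intros ec)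
  ultimately have "integral {0..1} G - 4 * 0 + 4 * 0
      \<le> (3 * F^2 + 4 * R) * integral {0..1} (\<lambda>\<xi>. ((e \<xi>)^2)^2)"
  proof (rule has_integral_le)
    fix \<xi> :: real assume \<xi>: "\<xi> \<in> {0..1}"
    have "G \<xi> - 4 * (3 * (e \<xi>)^2 * e' \<xi> * e' \<xi> + (e \<xi>)^3 * e'' \<xi>)
        + 4 * (3 * (e \<xi>)^2 * e' \<xi> * Q \<xi> + (e \<xi>)^3 * Q' \<xi>)
      = - 12 * (e \<xi>)^2 * (e' \<xi>)^2 + 12 * (e \<xi>)^3 * e' \<xi> * f' (Y \<xi>) + 4 * r' (Y \<xi>) * (e \<xi>)^4"
      unfolding G_def Q_def Q'_def by algebra
    also have "\<dots> \<le> (3 * F^2 + 4 * R) * ((e \<xi>)^2)^2"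
      by (rule cubic_energy_pointwise_bound[OF F[OF \<xi>] R[OF \<xi>]])
    finally show "G \<xi> - 4 * (3 * (e \<xi>)^2 * e' \<xi> * e' \<xi> + (e \<xi>)^3 * e'' \<xi>)
        + 4 * (3 * (e \<xi>)^2 * e' \<xi> * Q \<xi> + (e \<xi>)^3 * Q' \<xi>) \<le> (3 * F^2 + 4 * R) * ((e \<xi>)^2)^2" .
  qed
  then show ?thesis using lhs by simp
qed

lemma exp_bound_of_deriv_le:
  fixes E D :: "real \<Rightarrow> real"
  assumes Ec: "continuous_on {0..<T} E"
    and Ed: "\<And>t. t \<in> {0<..<T} \<Longrightarrow> (E has_real_derivative D t) (at t)"
    and DE: "\<And>t. t \<in> {0<..<T} \<Longrightarrow> D t \<le> c * E t"
    and t: "t \<in> {0..<T}"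
  shows "E t \<le> E 0 * exp (c * t)"
proof -
  define \<phi> where "\<phi> = (\<lambda>s. E s * exp (- c * s))"
  have "\<phi> t \<le> \<phi> 0"
  proof (rule DERIV_nonpos_imp_decreasing_open[of 0 t \<phi>])
    show "0 \<le> t" using t by simp
    show "continuous_on {0..t} \<phi>" unfolding \<phi>_def
      by (intro continuous_intros continuous_on_subset[OF Ec]) (use t in auto)
    fix x assume x: "0 < x" "x < t"
    have "(\<phi> has_real_derivative (D x - c * E x) * exp (- c * x)) (at x)"
      unfolding \<phi>_def using x t by (auto intro!: derivative_eq_intros Ed simp: algebra_simps)
    moreover have "(D x - c * E x) * exp (- c * x) \<le> 0"
      using DE[of x] x t by (simp add: mult_nonpos_nonneg)
    ultimately show "\<exists>y. (\<phi> has_real_derivative y) (at x) \<and> y \<le> 0" by blast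
  qed
  then show ?thesis by (simp add: \<phi>_def exp_minus field_simps)
qed

lemma continuous_on_swap_args:
  assumes "continuous_on (A \<times> B) (\<lambda>(x,t). u x t)"
  shows "continuous_on (B \<times> A) (\<lambda>(t,x). u x t)"
proof -
  have "continuous_on (B \<times> A) ((\<lambda>(x,t). u x t) \<circ> (\<lambda>p. (snd p, fst p)))"
    by (intro continuous_on_compose continuous_intros continuous_on_subset[OF assms]) auto
  then show ?thesis by (simp add: o_def case_prod_beta)
qed

lemma continuous_on_slice:
  assumes "continuous_on (A \<times> B) (\<lambda>(x,t). u x t)" "t \<in> B"
  shows "continuous_on A (\<lambda>x. u x t)"
proof -
  have "continuous_on A ((\<lambda>(x,t). u x t) \<circ> (\<lambda>x. (x, t)))"
    by (intro continuous_on_compose continuous_intros continuous_on_subset[OF assms(1)])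
       (use assms(2) in auto)
  then show ?thesis by (simp add: o_def)
qed

lemma has_real_derivative_L4_norm:
  fixes \<eta> et :: "real \<Rightarrow> real \<Rightarrow> real"
  assumes \<eta>c: "continuous_on ({0..1} \<times> {0..<T}) (\<lambda>(x,t). \<eta> x t)"
    and etc: "continuous_on ({0..1} \<times> {0<..<T}) (\<lambda>(x,t). et x t)"
    and der: "\<And>x t. x \<in> {0..1} \<Longrightarrow> t \<in> {0<..<T} \<Longrightarrow> ((\<lambda>s. \<eta> x s) has_real_derivative et x t) (at t)"
    and t: "t \<in> {0<..<T}"
  shows "((\<lambda>s. integral {0..1} (\<lambda>x. ((\<eta> x s)^2)^2)) has_real_derivative
      integral {0..1} (\<lambda>x. 4 * (\<eta> x t)^3 * et x t)) (at t)"
proof -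
  define a where "a = t / 2"
  define b where "b = (t + T) / 2"
  have ab: "0 < a" "a < t" "t < b" "b < T" using t by (auto simp: a_def b_def)
  have sub: "{a..b} \<subseteq> {0<..<T}" using ab by auto
  have "((\<lambda>s. integral (cbox 0 1) (\<lambda>x. ((\<eta> x s)^2)^2)) has_field_derivative
        integral (cbox 0 1) (\<lambda>x. 4 * (\<eta> x t)^3 * et x t)) (at t within {a..b})"
  proof (rule leibniz_rule_field_derivative)
    fix s x assume s: "s \<in> {a..b}" and x: "x \<in> cbox (0::real) 1"
    have "((\<lambda>s. \<eta> x s) has_real_derivative et x s) (at s)"
      using der s x sub by (auto simp: cbox_interval)
    from DERIV_power[OF DERIV_power[OF this, of 2], of 2]
    have "((\<lambda>s. ((\<eta> x s)^2)^2) has_real_derivative 4 * (\<eta> x s)^3 * et x s) (at s)"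
      by (simp add: power2_eq_square power3_eq_cube algebra_simps)
    then show "((\<lambda>s. ((\<eta> x s)^2)^2) has_real_derivative 4 * (\<eta> x s)^3 * et x s) (at s within {a..b})"
      by (rule has_field_derivative_at_within)
  next
    fix s assume "s \<in> {a..b}"
    then have "continuous_on {0..1} (\<lambda>x. \<eta> x s)" using sub by (intro continuous_on_slice[OF \<eta>c]) auto
    then show "(\<lambda>x. ((\<eta> x s)^2)^2) integrable_on cbox 0 1"
      by (simp add: cbox_interval integrable_continuous_interval continuous_intros)
  next
    have "continuous_on ({a..b} \<times> {0..1}) (\<lambda>(s,x). \<eta> x s)"
      by (rule continuous_on_subset[OF continuous_on_swap_args[OF \<eta>c]]) (use sub in auto)
    moreover have "continuous_on ({a..b} \<times> {0..1}) (\<lambda>(s,x). et x s)"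
      by (rule continuous_on_subset[OF continuous_on_swap_args[OF etc]]) (use sub in auto)
    ultimately show "continuous_on ({a..b} \<times> cbox 0 1) (\<lambda>(s,x). 4 * (\<eta> x s)^3 * et x s)"
      by (auto simp: case_prod_beta cbox_interval intro!: continuous_intros)
  qed (use ab in auto)
  moreover have "at t within {a..b} = at t" using ab by (intro at_within_Icc_at) auto
  ultimately show ?thesis by (simp add: cbox_interval)
qed

lemma solves_lin_pointwise:
  assumes "solves_lin f r T y \<eta>" and yder: "classical_derivs T y yt yx yxx"
    and f': "\<And>s. (f' has_real_derivative f'' s) (at s)" "deriv f = f'" and r': "deriv r = r'"
  obtains et ex exx where "continuous_on ({0..1} \<times> {0..<T}) (\<lambda>(x,t). \<eta> x t)"
    "continuous_on ({0..1} \<times> {0<..<T}) (\<lambda>(x,t). et x t)"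
    "continuous_on ({0..1} \<times> {0<..<T}) (\<lambda>(x,t). ex x t)"
    "continuous_on ({0..1} \<times> {0<..<T}) (\<lambda>(x,t). exx x t)"
    "classical_derivs T \<eta> et ex exx" "\<forall>t\<in>{0..<T}. \<eta> 0 t = 0 \<and> \<eta> 1 t = 0"
    "\<forall>x\<in>{0<..<1}. \<forall>t\<in>{0<..<T}. et x t + (f'' (y x t) * yx x t * \<eta> x t + f' (y x t) * ex x t)
       = exx x t + r' (y x t) * \<eta> x t"
proof -
  obtain et ex exx where reg: "continuous_on ({0..1} \<times> {0..<T}) (\<lambda>(x,t). \<eta> x t)"
      "continuous_on ({0..1} \<times> {0<..<T}) (\<lambda>(x,t). et x t)"
      "continuous_on ({0..1} \<times> {0<..<T}) (\<lambda>(x,t). ex x t)"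
      "continuous_on ({0..1} \<times> {0<..<T}) (\<lambda>(x,t). exx x t)" "classical_derivs T \<eta> et ex exx"
    using assms(1) unfolding solves_lin_def by (auto elim: classical_regE)
  have "et x t + (f'' (y x t) * yx x t * \<eta> x t + f' (y x t) * ex x t) = exx x t + r' (y x t) * \<eta> x t"
    if "x \<in> {0<..<1}" "t \<in> {0<..<T}" for x t
  proof -
    have "deriv (\<lambda>s. \<eta> x s) t + deriv (\<lambda>\<xi>. deriv f (y \<xi> t) * \<eta> \<xi> t) x
        = deriv (deriv (\<lambda>\<xi>. \<eta> \<xi> t)) x + deriv r (y x t) * \<eta> x t"
      using assms(1) that unfolding solves_lin_def by blast
    moreover have "((\<lambda>\<xi>. f' (y \<xi> t) * \<eta> \<xi> t) has_real_derivative
        f'' (y x t) * yx x t * \<eta> x t + f' (y x t) * ex x t) (at x)"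
      using DERIV_mult[OF DERIV_chain2[OF f'(1) classical_derivs_interior(2)[OF yder that]]
          classical_derivs_interior(2)[OF reg(5) that]] by (simp add: algebra_simps)
    then have "deriv (\<lambda>\<xi>. deriv f (y \<xi> t) * \<eta> \<xi> t) x
        = f'' (y x t) * yx x t * \<eta> x t + f' (y x t) * ex x t"
      unfolding f'(2) by (rule DERIV_imp_deriv)
    ultimately show ?thesis using classical_derivs_interior(1,3)[OF reg(5) that] r' by simp
  qed
  with that reg assms(1) show thesis by (auto simp: solves_lin_def)
qed

lemma solves_lin_L4_growth:
  assumes "C2 f" "C2 r" and sy: "solves_y f r T y" and sl: "solves_lin f r T y \<eta>"
    and F: "\<forall>x\<in>{0..1}. \<forall>t\<in>{0..<T}. \<bar>deriv f (y x t)\<bar> \<le> F"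
    and R: "\<forall>x\<in>{0..1}. \<forall>t\<in>{0..<T}. deriv r (y x t) \<le> R"
    and t: "t \<in> {0..<T}"
  shows "integral {0..1} (\<lambda>x. ((\<eta> x t)^2)^2)
    \<le> integral {0..1} (\<lambda>x. ((\<eta> x 0)^2)^2) * exp ((3 * F^2 + 4 * R) * t)"
proof -
  obtain f' f'' where f': "\<And>s. (f has_real_derivative f' s) (at s)"
    "\<And>s. (f' has_real_derivative f'' s) (at s)" "continuous_on UNIV f''" "deriv f = f'"
    using C2E[OF assms(1)] by metis
  obtain r' where r': "continuous_on UNIV r'" "deriv r = r'"
    using C2E[OF assms(2)] by metis
  obtain yt yx yxx where ycont: "continuous_on ({0..1} \<times> {0..<T}) (\<lambda>(x,t). y x t)"
    and yxc: "continuous_on ({0..1} \<times> {0<..<T}) (\<lambda>(x,t). yx x t)"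
    and yder: "classical_derivs T y yt yx yxx"
    using solves_y_pointwise[OF sy f'(1)] by metis
  obtain et ex exx where \<eta>c: "continuous_on ({0..1} \<times> {0..<T}) (\<lambda>(x,t). \<eta> x t)"
    and etc: "continuous_on ({0..1} \<times> {0<..<T}) (\<lambda>(x,t). et x t)"
    and exc: "continuous_on ({0..1} \<times> {0<..<T}) (\<lambda>(x,t). ex x t)"
    and exxc: "continuous_on ({0..1} \<times> {0<..<T}) (\<lambda>(x,t). exx x t)"
    and \<eta>der: "classical_derivs T \<eta> et ex exx" and \<eta>bd: "\<forall>t\<in>{0..<T}. \<eta> 0 t = 0 \<and> \<eta> 1 t = 0"
    and pde: "\<forall>x\<in>{0<..<1}. \<forall>t\<in>{0<..<T}. et x t + (f'' (y x t) * yx x t * \<eta> x t + f' (y x t) * ex x t)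
       = exx x t + r' (y x t) * \<eta> x t"
    using solves_lin_pointwise[OF sl yder f'(2,4) r'(2)] by metis
  define E where "E = (\<lambda>t. integral {0..1} (\<lambda>x. ((\<eta> x t)^2)^2))"
  define D where "D = (\<lambda>t. integral {0..1} (\<lambda>x. 4 * (\<eta> x t)^3 * et x t))"
  have "continuous_on ({0..<T} \<times> cbox 0 1) (\<lambda>(t,x). ((\<eta> x t)^2)^2)"
    using continuous_on_swap_args[OF \<eta>c] by (auto simp: case_prod_beta cbox_interval intro: continuous_intros)
  from integral_continuous_on_param[OF this] have "continuous_on {0..<T} E"
    by (simp add: E_def cbox_interval)
  moreover have "(E has_real_derivative D t) (at t)" if "t \<in> {0<..<T}" for t
    unfolding E_def D_def
    by (rule has_real_derivative_L4_norm[OF \<eta>c etc _ that]) (use \<eta>der in \<open>auto simp: classical_derivs_def\<close>)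
  moreover have "D t \<le> (3 * F^2 + 4 * R) * E t" if t: "t \<in> {0<..<T}" for t
    unfolding D_def E_def
  proof (rule linearized_energy_inequality[where e' = "\<lambda>\<xi>. ex \<xi> t" and e'' = "\<lambda>\<xi>. exx \<xi> t"
        and Y = "\<lambda>\<xi>. y \<xi> t" and Y' = "\<lambda>\<xi>. yx \<xi> t", OF _ _ _ _ _ _ _ _ _ _ f'(2,3) r'(1)])
    show "continuous_on {0..1} (\<lambda>\<xi>. \<eta> \<xi> t)" "continuous_on {0..1} (\<lambda>\<xi>. ex \<xi> t)"
      "continuous_on {0..1} (\<lambda>\<xi>. exx \<xi> t)" "continuous_on {0..1} (\<lambda>\<xi>. y \<xi> t)"
      "continuous_on {0..1} (\<lambda>\<xi>. yx \<xi> t)"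
      using t by (auto intro: continuous_on_slice[OF \<eta>c] continuous_on_slice[OF exc]
          continuous_on_slice[OF exxc] continuous_on_slice[OF ycont] continuous_on_slice[OF yxc])
  qed (use \<eta>der yder \<eta>bd pde F R f'(4) r'(2) t in \<open>auto simp: classical_derivs_def\<close>)
  ultimately have "E t \<le> E 0 * exp ((3 * F^2 + 4 * R) * t)"
    by (rule exp_bound_of_deriv_le[OF _ _ _ t])
  then show ?thesis by (simp add: E_def)
qed

lemma continuous_on_bounded_on_interval:
  fixes g :: "real \<Rightarrow> real"
  assumes "continuous_on UNIV g"
  obtains F where "F \<ge> 0" "\<forall>s. \<bar>s\<bar> \<le> M \<longrightarrow> \<bar>g s\<bar> \<le> F"
proof -
  have "compact (g ` {-M..M})"
    by (intro compact_continuous_image continuous_on_subset[OF assms]) auto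
  then obtain F where F: "\<forall>z\<in>g ` {-M..M}. norm z \<le> F"
    using compact_imp_bounded bounded_iff by metis
  have "\<bar>g s\<bar> \<le> \<bar>F\<bar>" if "\<bar>s\<bar> \<le> M" for s
  proof -
    have "s \<in> {-M..M}" using that by (auto simp: abs_le_iff)
    then have "norm (g s) \<le> F" using F by blast
    then show ?thesis by simp
  qed
  then show thesis using that[of "\<bar>F\<bar>"] by simp
qed

lemma L2norm_square_le_exp:
  assumes "integral {0..1} (\<lambda>x. ((g x)^2)^2) \<le> integral {0..1} (\<lambda>x. ((h x)^2)^2) * exp (2 * c)"
  shows "L2norm (\<lambda>x. (g x)^2) \<le> L2norm (\<lambda>x. (h x)^2) * exp c"
proof -
  have "L2norm (\<lambda>x. (g x)^2) \<le> sqrt (integral {0..1} (\<lambda>x. ((h x)^2)^2) * exp c ^ 2)"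
    using assms unfolding L2norm_def by (simp add: exp_double[symmetric] mult.commute)
  also have "\<dots> = L2norm (\<lambda>x. (h x)^2) * exp c"
    unfolding L2norm_def by (simp add: real_sqrt_mult)
  finally show ?thesis .
qed

lemma solves_lin_L4_growth_uniform:
  assumes "C2 f" "C2 r"
    and "(\<integral>\<^sup>+ s. ennreal (indicator {..0} s / (\<bar>r s\<bar> + 1)) \<partial>lborel) = \<infinity>"
    and "(\<integral>\<^sup>+ s. ennreal (indicator {0..} s / (\<bar>r s\<bar> + 1)) \<partial>lborel) = \<infinity>"
    and A: "A \<ge> 0"
  obtains \<alpha> where "\<alpha> \<ge> 0"
    "\<And>y \<eta> t. solves_y f r T y \<Longrightarrow> \<forall>x\<in>{0..1}. \<bar>y x 0\<bar> \<le> A \<Longrightarrow> solves_lin f r T y \<eta> \<Longrightarrow>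
      t \<in> {0..<T} \<Longrightarrow> integral {0..1} (\<lambda>x. ((\<eta> x t)^2)^2)
        \<le> integral {0..1} (\<lambda>x. ((\<eta> x 0)^2)^2) * exp (2 * (\<alpha> * t))"
proof -
  obtain M where M: "\<And>y. solves_y f r T y \<Longrightarrow> \<forall>x\<in>{0..1}. \<bar>y x 0\<bar> \<le> A \<Longrightarrow>
      \<forall>x\<in>{0..1}. \<forall>t\<in>{0..<T}. \<bar>y x t\<bar> \<le> M"
    using solves_y_bounded[OF assms] by metis
  obtain F where F: "\<forall>s. \<bar>s\<bar> \<le> M \<longrightarrow> \<bar>deriv f s\<bar> \<le> F"
    using C2E[OF assms(1)] continuous_on_bounded_on_interval by metis
  obtain R where R: "R \<ge> 0" "\<forall>s. \<bar>s\<bar> \<le> M \<longrightarrow> \<bar>deriv r s\<bar> \<le> R"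
    using C2E[OF assms(2)] continuous_on_bounded_on_interval by metis
  show thesis
  proof (rule that[of "(3 * F^2 + 4 * R) / 2"])
    show "(3 * F^2 + 4 * R) / 2 \<ge> 0" using R by simp
    fix y \<eta> t assume sy: "solves_y f r T y" and "\<forall>x\<in>{0..1}. \<bar>y x 0\<bar> \<le> A"
      and sl: "solves_lin f r T y \<eta>" and t: "t \<in> {0..<T}"
    then have yM: "\<forall>x\<in>{0..1}. \<forall>t\<in>{0..<T}. \<bar>y x t\<bar> \<le> M" using M by blast
    have "integral {0..1} (\<lambda>x. ((\<eta> x t)^2)^2)
        \<le> integral {0..1} (\<lambda>x. ((\<eta> x 0)^2)^2) * exp ((3 * F^2 + 4 * R) * t)"
      by (rule solves_lin_L4_growth[OF assms(1,2) sy sl _ _ t]) (use yM F R in \<open>auto simp: abs_le_iff\<close>)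
    then show "integral {0..1} (\<lambda>x. ((\<eta> x t)^2)^2)
        \<le> integral {0..1} (\<lambda>x. ((\<eta> x 0)^2)^2) * exp (2 * ((3 * F^2 + 4 * R) / 2 * t))"
      by simp
  qed
qed

theorem lemma2:
  fixes f r :: "real \<Rightarrow> real"
  assumes "C2 f" and "C2 r"
    and "(\<integral>\<^sup>+ s. ennreal (indicator {..0} s / (\<bar>r s\<bar> + 1)) \<partial>lborel) = \<infinity>"
    and "(\<integral>\<^sup>+ s. ennreal (indicator {0..} s / (\<bar>r s\<bar> + 1)) \<partial>lborel) = \<infinity>"
  shows "\<forall>A T. A \<ge> 0 \<longrightarrow> T > 0 \<longrightarrow>
    (\<exists>\<alpha>\<ge>0. \<forall>y \<eta> v.
       solves_y f r T y \<longrightarrow> (\<forall>x\<in>{0..1}. \<bar>y x 0\<bar> \<le> A) \<longrightarrow>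
       solves_lin f r T y \<eta> \<longrightarrow> H10 v \<longrightarrow> (\<forall>x\<in>{0..1}. \<eta> x 0 = v x) \<longrightarrow>
       (\<forall>t\<in>{0..<T}. L2norm (\<lambda>x. (\<eta> x t)^2) \<le> L2norm (\<lambda>x. (v x)^2) * exp (\<alpha> * t)))"
proof (intro allI impI, goal_cases)
  case (1 A T)
  then obtain \<alpha> where \<alpha>: "\<alpha> \<ge> 0"
    "\<And>y \<eta> t. solves_y f r T y \<Longrightarrow> \<forall>x\<in>{0..1}. \<bar>y x 0\<bar> \<le> A \<Longrightarrow> solves_lin f r T y \<eta> \<Longrightarrow>
      t \<in> {0..<T} \<Longrightarrow> integral {0..1} (\<lambda>x. ((\<eta> x t)^2)^2)
        \<le> integral {0..1} (\<lambda>x. ((\<eta> x 0)^2)^2) * exp (2 * (\<alpha> * t))"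
    using solves_lin_L4_growth_uniform[OF assms] by metis
  show ?case
  proof (intro exI[of _ \<alpha>] conjI allI impI ballI)
    fix y \<eta> v t assume "solves_y f r T y" "\<forall>x\<in>{0..1}. \<bar>y x 0\<bar> \<le> A" "solves_lin f r T y \<eta>"
      and \<eta>v: "\<forall>x\<in>{0..1}. \<eta> x 0 = v x" and "t \<in> {0..<T}"
    then have "integral {0..1} (\<lambda>x. ((\<eta> x t)^2)^2)
        \<le> integral {0..1} (\<lambda>x. ((\<eta> x 0)^2)^2) * exp (2 * (\<alpha> * t))"
      by (intro \<alpha>(2))
    also have "integral {0..1} (\<lambda>x. ((\<eta> x 0)^2)^2) = integral {0..1} (\<lambda>x. ((v x)^2)^2)"
      using \<eta>v by (intro integral_cong) auto
    finally show "L2norm (\<lambda>x. (\<eta> x t)^2) \<le> L2norm (\<lambda>x. (v x)^2) * exp (\<alpha> * t)"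
      by (rule L2norm_square_le_exp)
  qed (rule \<alpha>(1))
qed

end
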